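(* Let $\mu>0$ and $\gamma>0$, and set $p(x)=\frac{\gamma}{\mu^{3/2}}+\sqrt\mu\,x$. The function $$\widehat\phi(x)=e^{-\gamma x/\mu}\,U\Big(-\frac{\gamma^2}{4\mu^3},\frac12,p(x)^2\Big),\qquad x\ge0,$$ is a positive, decreasing solution on $[0,\infty)$ of $\frac12f''(x)-\mu xf'(x)-\gamma xf(x)=0$, and $\widehat\phi(x)\to0$ as $x\to\infty$.
   Context: Kummer's function is $M(a,b,x)=\sum_{n\ge0}\frac{(a)_n}{(b)_n}\frac{x^n}{n!}$ with $(a)_0=1$, $(a)_n=a(a+1)\cdots(a+n-1)$. The Tricomi confluent hypergeometric function is, for $b\notin\mathbb Z$, $U(a,b,x)=\frac{\Gamma(1-b)}{\Gamma(a-b+1)}M(a,b,x)+\frac{\Gamma(b-1)}{\Gamma(a)}x^{1-b}M(1+a-b,2-b,x)$ (with $1/\Gamma$ at poles of $\Gamma$ equal to $0$); it solves $xz''+(b-x)z'-az=0$ and $U(a,b,x)\sim x^{-a}$ as $x\to\infty$. *)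

theory Defs
  imports "HOL-Analysis.Analysis"
begin

definition kummerM :: "real \<Rightarrow> real \<Rightarrow> real \<Rightarrow> real" where
  "kummerM a b x = (\<Sum>n. pochhammer a n / pochhammer b n * x ^ n / fact n)"

text \<open>Tricomi's function U(a,b,x) for non-integer b and x > 0, via the connection
  formula; rGamma is 1/Gamma and vanishes at the poles of Gamma.\<close>
definition tricomiU :: "real \<Rightarrow> real \<Rightarrow> real \<Rightarrow> real" where
  "tricomiU a b x =
     Gamma (1 - b) * rGamma (a - b + 1) * kummerM a b x
     + Gamma (b - 1) * rGamma a * x powr (1 - b) * kummerM (1 + a - b) (2 - b) x"

end

theory Submission
  imports Defs
begin

text \<open>Put \<open>s = \<surd>\<mu>\<close>, \<open>c = \<gamma>/\<mu>^(3/2)\<close>, \<open>a = -c\<^sup>2/4\<close> and \<open>w\<^sub>a(p) = U(a, 1/2, p\<^sup>2)\<close>, so that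
  \<open>\<phi>(x) = exp(-s c x) w\<^sub>a(c + s x)\<close>. As a function of \<open>p\<close>, \<open>w\<^sub>a\<close> is an entire power series with
  \<open>w\<^sub>a' = -2a w\<^sub>a\<^sub>+\<^sub>1\<^sub>/\<^sub>2\<close> and \<open>w\<^sub>a = p w\<^sub>a\<^sub>+\<^sub>1\<^sub>/\<^sub>2 + (a + 1/2) w\<^sub>a\<^sub>+\<^sub>1\<close>; together these give
  \<open>w'' = 2p w' - c\<^sup>2 w\<close>, which the exponential factor turns into the stated equation.
  For \<open>a > 0\<close>, \<open>w\<^sub>a(p)\<close> is a positive multiple of the integral of
  \<open>t^(a-1) exp(-t - 2p\<surd>t)\<close> over \<open>t > 0\<close>, hence positive. Starting from such parameters, the
  three-term relation carries \<open>w\<^sub>a > (p/2) w\<^sub>a\<^sub>+\<^sub>1\<^sub>/\<^sub>2 > 0\<close> down to \<open>a = -c\<^sup>2/4\<close> for \<open>p \<ge> c\<close>.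
  This gives \<open>\<phi> > 0\<close> and \<open>\<phi>' < 0\<close>; iterating the relation bounds \<open>w\<^sub>a\<close> polynomially, so the
  exponential factor forces \<open>\<phi> \<rightarrow> 0\<close>.\<close>

text \<open>Taylor coefficients of \<open>w\<^sub>a\<close>: the recursion is that of \<open>w'' = 2p w' + 4a w\<close>, and the two
  initial values come from the connection formula defining \<open>tricomiU\<close>.\<close>
fun tricomi_coeff :: "real \<Rightarrow> nat \<Rightarrow> real" where
  "tricomi_coeff a 0 = sqrt pi * rGamma (a + 1/2)"
| "tricomi_coeff a (Suc 0) = -2 * sqrt pi * rGamma a"
| "tricomi_coeff a (Suc (Suc k)) =
     (2 * real k + 4 * a) / ((real k + 2) * (real k + 1)) * tricomi_coeff a k"

lemma tricomi_coeff_diffs: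
  "(real k + 1) * tricomi_coeff a (Suc k) = -2 * a * tricomi_coeff (a + 1/2) k"
proof (induction k rule: induct_nat_012)
  case 0
  then show ?case using rGamma_plus1[of a, symmetric] by (simp add: algebra_simps)
next
  case 1
  then show ?case by (simp add: field_simps)
next
  case (ge2 n)
  have nz: "real n + 1 \<noteq> 0" "real n + 2 \<noteq> 0" by linarith+
  have "(real (Suc (Suc n)) + 1) * tricomi_coeff a (Suc (Suc (Suc n)))
     = (2 * real (Suc n) + 4 * a) / ((real n + 2) * (real n + 1))
       * ((real n + 1) * tricomi_coeff a (Suc n))"
    using nz by (simp add: divide_simps, (simp add: algebra_simps)?)
  also have "\<dots> = (2 * real (Suc n) + 4 * a) / ((real n + 2) * (real n + 1))
       * (-2 * a * tricomi_coeff (a + 1/2) n)"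
    using ge2(1) by simp
  also have "\<dots> = -2 * a * tricomi_coeff (a + 1/2) (Suc (Suc n))"
    using nz by (simp add: divide_simps, (simp add: algebra_simps)?)
  finally show ?case .
qed

lemma tricomi_coeff_contiguous:
  "(real k + 2 * a) * tricomi_coeff a k = 2 * a * (a + 1/2) * tricomi_coeff (a + 1) k"
proof (induction k rule: induct_nat_012)
  case 0
  have "rGamma (a + 1/2) = (a + 1/2) * rGamma (a + 3/2)"
    using rGamma_plus1[of "a + 1/2", symmetric] by (simp add: add.assoc)
  then show ?case by (simp add: algebra_simps)
next
  case 1
  then show ?case using rGamma_plus1[of a, symmetric] by (simp add: algebra_simps)
next
  case (ge2 n)
  have nz: "real n + 1 \<noteq> 0" "real n + 2 \<noteq> 0" by linarith+
  have "(real (Suc (Suc n)) + 2 * a) * tricomi_coeff a (Suc (Suc n))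
     = 2 * (real n + 2 * a + 2) / ((real n + 2) * (real n + 1)) * ((real n + 2 * a) * tricomi_coeff a n)"
    using nz by (simp add: divide_simps, (simp add: algebra_simps)?)
  also have "\<dots> = 2 * (real n + 2 * a + 2) / ((real n + 2) * (real n + 1))
       * (2 * a * (a + 1/2) * tricomi_coeff (a + 1) n)"
    using ge2(1) by simp
  also have "\<dots> = 2 * a * (a + 1/2) * tricomi_coeff (a + 1) (Suc (Suc n))"
    using nz by (simp add: divide_simps, (simp add: algebra_simps)?)
  finally show ?case .
qed

lemma tricomi_coeff_recurrence:
  "tricomi_coeff a (Suc k) = tricomi_coeff (a + 1/2) k + (a + 1/2) * tricomi_coeff (a + 1) (Suc k)"
proof (cases k)
  case 0
  then show ?thesis using rGamma_plus1[of a, symmetric] by (simp add: algebra_simps)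
next
  case (Suc m)
  have nz: "real m + 1 \<noteq> 0" "real m + 2 \<noteq> 0" by linarith+
  have shift: "tricomi_coeff (a + 1/2) (Suc m) = -2 * (a + 1/2) * tricomi_coeff (a + 1) m / (real m + 1)"
  proof -
    have "(real m + 1) * tricomi_coeff (a + 1/2) (Suc m) = -2 * (a + 1/2) * tricomi_coeff (a + 1) m"
      using tricomi_coeff_diffs[of m "a + 1/2"] by (simp add: add.assoc)
    then show ?thesis using nz by (simp add: divide_simps, (simp add: algebra_simps)?)
  qed
  have "tricomi_coeff a (Suc (Suc m)) = (2 * real m + 4 * a) / ((real m + 2) * (real m + 1)) * tricomi_coeff a m"
    by simp
  also have "\<dots> = 4 * a * (a + 1/2) * tricomi_coeff (a + 1) m / ((real m + 2) * (real m + 1))"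
    using tricomi_coeff_contiguous[of m a] nz by (simp add: divide_simps, (simp add: algebra_simps)?)
  also have "\<dots> = tricomi_coeff (a + 1/2) (Suc m) + (a + 1/2) * tricomi_coeff (a + 1) (Suc (Suc m))"
    unfolding shift tricomi_coeff.simps using nz by (simp add: divide_simps, (simp add: algebra_simps)?)
  finally show ?thesis using Suc by simp
qed

lemma tricomi_coeff_even:
  "tricomi_coeff a (2 * n) = sqrt pi * rGamma (a + 1/2) * (pochhammer a n / pochhammer (1/2) n / fact n)"
proof (induction n)
  case (Suc n)
  have pos: "pochhammer (1/2::real) n > 0" by (rule pochhammer_pos) simp
  have nz: "real n + 1 \<noteq> 0" "2 * real n + 1 \<noteq> 0" "2 * real n + 2 \<noteq> 0" by linarith+
  have "tricomi_coeff a (2 * Suc n)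
      = (2 * real (2 * n) + 4 * a) / ((real (2 * n) + 2) * (real (2 * n) + 1)) * tricomi_coeff a (2 * n)"
    by (simp add: numeral_eq_Suc)
  also have "\<dots> = (a + real n) / ((1/2 + real n) * (real n + 1)) * tricomi_coeff a (2 * n)"
    using nz by (simp add: divide_simps, (simp add: algebra_simps)?)
  finally show ?case
    unfolding Suc pochhammer_Suc fact_Suc using pos nz by (simp add: divide_simps, (simp add: algebra_simps)?)
qed simp

lemma tricomi_coeff_odd:
  "tricomi_coeff a (2 * n + 1) = -2 * sqrt pi * rGamma a * (pochhammer (a + 1/2) n / pochhammer (3/2) n / fact n)"
proof (induction n)
  case (Suc n)
  have pos: "pochhammer (3/2::real) n > 0" by (rule pochhammer_pos) simp
  have nz: "real n + 1 \<noteq> 0" "2 * real n + 3 \<noteq> 0" "2 * real n + 2 \<noteq> 0" by linarith+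
  have "tricomi_coeff a (2 * Suc n + 1)
      = (2 * real (2 * n + 1) + 4 * a) / ((real (2 * n + 1) + 2) * (real (2 * n + 1) + 1))
        * tricomi_coeff a (2 * n + 1)"
    by (simp add: numeral_eq_Suc)
  also have "\<dots> = (a + 1/2 + real n) / ((3/2 + real n) * (real n + 1)) * tricomi_coeff a (2 * n + 1)"
    using nz by (simp add: divide_simps, (simp add: algebra_simps)?)
  finally show ?case
    unfolding Suc pochhammer_Suc fact_Suc using pos nz by (simp add: divide_simps, (simp add: algebra_simps)?)
qed simp

definition kummer_term :: "real \<Rightarrow> real \<Rightarrow> real \<Rightarrow> nat \<Rightarrow> real" where
  "kummer_term a b z n = pochhammer a n / pochhammer b n * z ^ n / fact n"

lemma kummer_term_Suc:
  assumes "b > 0"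
  shows "kummer_term a b z (Suc n) = kummer_term a b z n * ((a + real n) * z / ((b + real n) * (real n + 1)))"
proof -
  have "pochhammer b n > 0" using assms by (intro pochhammer_pos) simp
  moreover have "b + real n \<noteq> 0" "real n + 1 \<noteq> 0" using assms by linarith+
  ultimately show ?thesis
    unfolding kummer_term_def pochhammer_Suc fact_Suc by (simp add: divide_simps, (simp add: algebra_simps)?)
qed

lemma summable_abs_kummer_term:
  assumes b: "b > 0"
  shows "summable (\<lambda>n. \<bar>kummer_term a b z n\<bar>)"
proof (rule summable_ratio_test[of "1/2" "nat \<lceil>\<bar>a\<bar> + 4 * \<bar>z\<bar> + 1\<rceil>"])
  fix n assume "n \<ge> nat \<lceil>\<bar>a\<bar> + 4 * \<bar>z\<bar> + 1\<rceil>"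
  hence n: "real n \<ge> \<bar>a\<bar> + 4 * \<bar>z\<bar> + 1" by linarith
  have "\<bar>a + real n\<bar> * \<bar>z\<bar> \<le> (2 * real n) * (real n / 4)"
    by (rule mult_mono) (use n in auto)
  also have "\<dots> \<le> 1/2 * ((b + real n) * (real n + 1))"
    using b by (simp add: algebra_simps)
  finally have ratio: "\<bar>(a + real n) * z / ((b + real n) * (real n + 1))\<bar> \<le> 1/2"
    using b by (simp add: abs_mult divide_simps, (simp add: algebra_simps)?)
  have "\<bar>kummer_term a b z (Suc n)\<bar>
      = \<bar>kummer_term a b z n\<bar> * \<bar>(a + real n) * z / ((b + real n) * (real n + 1))\<bar>"
    using kummer_term_Suc[OF b] by (simp add: abs_mult)
  also have "\<dots> \<le> \<bar>kummer_term a b z n\<bar> * (1/2)"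
    by (rule mult_left_mono[OF ratio]) simp
  finally show "norm \<bar>kummer_term a b z (Suc n)\<bar> \<le> 1/2 * norm \<bar>kummer_term a b z n\<bar>" by simp
qed simp

lemma sums_even_odd:
  fixes f :: "nat \<Rightarrow> real"
  assumes "(\<lambda>n. f (2 * n)) sums s" and "(\<lambda>n. f (2 * n + 1)) sums t"
  shows "f sums (s + t)"
proof -
  define fe where "fe k = (if even k then f k else 0)" for k
  define fo where "fo k = (if odd k then f k else 0)" for k
  have "(\<lambda>n. fe (2 * n)) sums s" using assms(1) by (simp add: fe_def)
  hence "fe sums s"
    by (subst (asm) sums_mono_reindex[OF strict_monoI]) (auto simp: fe_def elim!: evenE)
  moreover have "(\<lambda>n. fo (2 * n + 1)) sums t" using assms(2) by (simp add: fo_def)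
  hence "fo sums t"
    by (subst (asm) sums_mono_reindex[OF strict_monoI]) (auto simp: fo_def elim!: oddE)
  ultimately have "(\<lambda>k. fe k + fo k) sums (s + t)" by (rule sums_add)
  moreover have "(\<lambda>k. fe k + fo k) = f" by (auto simp: fe_def fo_def)
  ultimately show ?thesis by simp
qed

text \<open>\<open>U(a, 1/2, p\<^sup>2)\<close> as a power series in \<open>p\<close> (see \<open>tricomiU_half_eq\<close>); unlike the connection
  formula it is defined and smooth for all real \<open>p\<close>.\<close>
definition tricomi_half :: "real \<Rightarrow> real \<Rightarrow> real" where
  "tricomi_half a p = (\<Sum>k. tricomi_coeff a k * p ^ k)"

lemma tricomi_coeff_even_term:
  "tricomi_coeff a (2 * n) * p ^ (2 * n) = sqrt pi * rGamma (a + 1/2) * kummer_term a (1/2) (p\<^sup>2) n"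
  unfolding tricomi_coeff_even kummer_term_def power_mult by simp

lemma tricomi_coeff_odd_term:
  "tricomi_coeff a (2 * n + 1) * p ^ (2 * n + 1)
     = -2 * sqrt pi * rGamma a * p * kummer_term (a + 1/2) (3/2) (p\<^sup>2) n"
  unfolding tricomi_coeff_odd kummer_term_def power_add power_mult by simp

lemma summable_abs_tricomi_coeff: "summable (\<lambda>k. \<bar>tricomi_coeff a k * p ^ k\<bar>)"
proof -
  have "(\<lambda>n. \<bar>tricomi_coeff a (2 * n) * p ^ (2 * n)\<bar>)
      sums (\<bar>sqrt pi * rGamma (a + 1/2)\<bar> * (\<Sum>n. \<bar>kummer_term a (1/2) (p\<^sup>2) n\<bar>))"
    unfolding tricomi_coeff_even_term abs_mult
    by (intro sums_mult summable_sums summable_abs_kummer_term) simp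
  moreover have "(\<lambda>n. \<bar>tricomi_coeff a (2 * n + 1) * p ^ (2 * n + 1)\<bar>)
      sums (\<bar>-2 * sqrt pi * rGamma a * p\<bar> * (\<Sum>n. \<bar>kummer_term (a + 1/2) (3/2) (p\<^sup>2) n\<bar>))"
    unfolding tricomi_coeff_odd_term abs_mult[of "-2 * sqrt pi * rGamma a * p"]
    by (intro sums_mult summable_sums summable_abs_kummer_term) simp
  ultimately show ?thesis by (rule sums_summable[OF sums_even_odd])
qed

lemma summable_tricomi_coeff: "summable (\<lambda>k. tricomi_coeff a k * p ^ k)"
  by (rule summable_rabs_cancel[OF summable_abs_tricomi_coeff])

lemma tricomi_half_kummerM:
  "tricomi_half a p = sqrt pi * rGamma (a + 1/2) * kummerM a (1/2) (p\<^sup>2)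
     - 2 * sqrt pi * rGamma a * p * kummerM (a + 1/2) (3/2) (p\<^sup>2)"
proof -
  have "summable (kummer_term x b (p\<^sup>2))" if "b > 0" for x b :: real
    using summable_rabs_cancel[OF summable_abs_kummer_term[OF that]] .
  hence "(\<lambda>n. tricomi_coeff a (2 * n) * p ^ (2 * n))
          sums (sqrt pi * rGamma (a + 1/2) * kummerM a (1/2) (p\<^sup>2))"
    and "(\<lambda>n. tricomi_coeff a (2 * n + 1) * p ^ (2 * n + 1))
          sums (-2 * sqrt pi * rGamma a * p * kummerM (a + 1/2) (3/2) (p\<^sup>2))"
    unfolding tricomi_coeff_even_term tricomi_coeff_odd_term kummerM_def kummer_term_def[symmetric]
    by (intro sums_mult summable_sums; simp)+
  from sums_unique[OF sums_even_odd[OF this]] show ?thesis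
    unfolding tricomi_half_def by simp
qed

lemma Gamma_minus_half_real: "Gamma (-1/2 :: real) = -2 * sqrt pi"
proof -
  have "rGamma (-1/2 :: real) = (-1/2) * rGamma (1/2)"
    using rGamma_plus1[of "-1/2 :: real"] by simp
  moreover have "rGamma (1/2 :: real) = inverse (sqrt pi)"
    by (simp add: rGamma_inverse_Gamma Gamma_one_half_real)
  moreover have "Gamma (-1/2 :: real) = inverse (rGamma (-1/2))"
    by (simp add: rGamma_inverse_Gamma)
  ultimately have "Gamma (-1/2 :: real) = inverse ((-1/2) * inverse (sqrt pi))"
    by simp
  thus ?thesis by (simp add: field_simps)
qed

lemma tricomiU_half_eq:
  assumes "p > 0"
  shows "tricomiU a (1/2) (p\<^sup>2) = tricomi_half a p"
proof -
  have "(p\<^sup>2) powr (1 - 1/2) = p" using assms by (simp add: powr_half_sqrt)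
  moreover have "Gamma (- (1/2) :: real) = -2 * sqrt pi" using Gamma_minus_half_real by simp
  ultimately show ?thesis unfolding tricomiU_def tricomi_half_kummerM
    by (simp add: Gamma_one_half_real algebra_simps)
qed

lemma has_field_derivative_tricomi_half:
  "(tricomi_half a has_real_derivative (-2 * a * tricomi_half (a + 1/2) p)) (at p)"
proof -
  have "((\<lambda>x. \<Sum>n. tricomi_coeff a n * x ^ n) has_real_derivative
          (\<Sum>n. diffs (tricomi_coeff a) n * p ^ n)) (at p)"
    by (rule termdiffs_strong[where K = "\<bar>p\<bar> + 1"]) (use summable_tricomi_coeff in auto)
  moreover have "diffs (tricomi_coeff a) = (\<lambda>n. -2 * a * tricomi_coeff (a + 1/2) n)"
    using tricomi_coeff_diffs by (simp add: fun_eq_iff diffs_def algebra_simps)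
  moreover have "(\<Sum>n. -2 * a * tricomi_coeff (a + 1/2) n * p ^ n) = -2 * a * tricomi_half (a + 1/2) p"
    unfolding tricomi_half_def
    by (subst suminf_mult[symmetric]) (auto intro: summable_tricomi_coeff simp: mult.assoc)
  ultimately show ?thesis unfolding tricomi_half_def[abs_def] by simp
qed

lemma tricomi_half_recurrence:
  "tricomi_half a p = p * tricomi_half (a + 1/2) p + (a + 1/2) * tricomi_half (a + 1) p"
proof -
  have sums: "(\<lambda>k. tricomi_coeff b k * p ^ k) sums tricomi_half b p" for b
    unfolding tricomi_half_def by (rule summable_sums[OF summable_tricomi_coeff])
  have tail: "(\<lambda>n. tricomi_coeff b (Suc n) * p ^ Suc n) sums (tricomi_half b p - tricomi_coeff b 0)" for b
    using sums[of b] by (subst sums_Suc_iff) simp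
  have "(\<lambda>n. p * (tricomi_coeff (a + 1/2) n * p ^ n) + (a + 1/2) * (tricomi_coeff (a + 1) (Suc n) * p ^ Suc n))
      sums (p * tricomi_half (a + 1/2) p + (a + 1/2) * (tricomi_half (a + 1) p - tricomi_coeff (a + 1) 0))"
    by (intro sums_add sums_mult sums tail)
  moreover have "(\<lambda>n. p * (tricomi_coeff (a + 1/2) n * p ^ n) + (a + 1/2) * (tricomi_coeff (a + 1) (Suc n) * p ^ Suc n))
      = (\<lambda>n. tricomi_coeff a (Suc n) * p ^ Suc n)"
    by (rule ext) (subst tricomi_coeff_recurrence, simp add: algebra_simps)
  ultimately have "tricomi_half a p - tricomi_coeff a 0
      = p * tricomi_half (a + 1/2) p + (a + 1/2) * (tricomi_half (a + 1) p - tricomi_coeff (a + 1) 0)"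
    using tail[of a] sums_unique2 by metis
  moreover have "tricomi_coeff a 0 = (a + 1/2) * tricomi_coeff (a + 1) 0"
  proof -
    have "rGamma (a + 1/2) = (a + 1/2) * rGamma (a + 3/2)"
      using rGamma_plus1[of "a + 1/2", symmetric] by (simp add: add.assoc)
    then show ?thesis by (simp add: algebra_simps)
  qed
  ultimately show ?thesis by (simp add: algebra_simps del: tricomi_coeff.simps)
qed

lemma rGamma_real_pos: "x > 0 \<Longrightarrow> rGamma (x :: real) > 0"
  using Gamma_real_pos[of x] by (simp add: rGamma_inverse_Gamma)

lemma tricomi_coeff_Gamma:
  assumes a: "a > 0"
  shows "tricomi_coeff a k
    = sqrt pi * rGamma a * rGamma (a + 1/2) * ((-2) ^ k / fact k * Gamma (a + real k / 2))"
proof (induction k rule: induct_nat_012)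
  case 0
  have "Gamma a \<noteq> 0" using Gamma_real_pos[OF a] by simp
  then show ?case by (simp add: rGamma_inverse_Gamma)
next
  case 1
  have "a + 1/2 > 0" using a by simp
  from Gamma_real_pos[OF this] have "Gamma (a + 1/2) \<noteq> 0" by simp
  then show ?case by (simp add: rGamma_inverse_Gamma algebra_simps)
next
  case (ge2 n)
  have "a + real n / 2 \<notin> \<int>\<^sub>\<le>\<^sub>0"
    using a by (auto elim!: nonpos_Ints_cases)
  moreover have "a + real (Suc (Suc n)) / 2 = (a + real n / 2) + 1" by (simp add: field_simps)
  ultimately have Gamma: "Gamma (a + real (Suc (Suc n)) / 2) = (a + real n / 2) * Gamma (a + real n / 2)"
    by (metis Gamma_plus1)
  have "real n + 1 \<noteq> 0" "real n + 2 \<noteq> 0" by linarith+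
  then show ?case unfolding tricomi_coeff.simps ge2(1) Gamma fact_Suc power_Suc
    by (simp add: divide_simps, (simp add: algebra_simps)?)
qed

definition Gamma_integrand :: "real \<Rightarrow> real \<Rightarrow> real" where
  "Gamma_integrand s t = indicator {0..} t * t powr (s - 1) / exp t"

lemma Gamma_integrand_nonneg: "Gamma_integrand s t \<ge> 0"
  unfolding Gamma_integrand_def by (auto simp: indicator_def)

lemma Gamma_integrand_measurable [measurable]: "Gamma_integrand s \<in> borel_measurable borel"
  unfolding Gamma_integrand_def by measurable

lemma
  assumes "s > 0"
  shows integrable_Gamma_integrand: "integrable lborel (Gamma_integrand s)"
    and integral_Gamma_integrand: "integral\<^sup>L lborel (Gamma_integrand s) = Gamma s"
proof -
  have "(\<integral>\<^sup>+t. ennreal (Gamma_integrand s t) \<partial>lborel) = ennreal (Gamma s)"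
    using Gamma_conv_nn_integral_real[OF assms] by (simp add: Gamma_integrand_def)
  hence "integrable lborel (Gamma_integrand s) \<and> integral\<^sup>L lborel (Gamma_integrand s) = Gamma s"
    by (subst (asm) nn_integral_eq_integrable)
       (auto simp: Gamma_integrand_nonneg less_imp_le[OF Gamma_real_pos[OF assms]])
  thus "integrable lborel (Gamma_integrand s)" "integral\<^sup>L lborel (Gamma_integrand s) = Gamma s"
    by auto
qed

lemma Gamma_integrand_add_half:
  "Gamma_integrand (a + real k / 2) t = Gamma_integrand a t * sqrt t ^ k"
proof (cases "t > 0")
  case True
  have "t powr (a + real k / 2 - 1) = t powr (a - 1) * (t powr (1/2)) powr real k"
    by (simp add: powr_add[symmetric] powr_powr algebra_simps)
  also have "(t powr (1/2)) powr real k = sqrt t ^ k"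
    using True by (simp add: powr_half_sqrt powr_realpow)
  finally show ?thesis unfolding Gamma_integrand_def by simp
next
  case False
  then show ?thesis unfolding Gamma_integrand_def by (cases "t = 0") (auto simp: indicator_def)
qed

lemma Gamma_integrand_exp_series:
  "(\<lambda>k. (-2 * p) ^ k / fact k * Gamma_integrand (a + real k / 2) t)
     sums (Gamma_integrand a t * exp (-2 * p * sqrt t))"
  "summable (\<lambda>k. norm ((-2 * p) ^ k / fact k * Gamma_integrand (a + real k / 2) t))"
proof -
  have term_eq: "(-2 * p) ^ k / fact k * Gamma_integrand (a + real k / 2) t
      = Gamma_integrand a t * ((-2 * p * sqrt t) ^ k / fact k)" for k
    unfolding Gamma_integrand_add_half power_mult_distrib by simp
  show "(\<lambda>k. (-2 * p) ^ k / fact k * Gamma_integrand (a + real k / 2) t)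
      sums (Gamma_integrand a t * exp (-2 * p * sqrt t))"
    unfolding term_eq
    using exp_converges[of "-2 * p * sqrt t"] by (intro sums_mult) (simp add: field_simps)
  have "summable (\<lambda>k. \<bar>-2 * p * sqrt t\<bar> ^ k / fact k)"
    using summable_exp[of "\<bar>-2 * p * sqrt t\<bar>"] by (simp add: divide_inverse_commute)
  hence "summable (\<lambda>k. Gamma_integrand a t * (\<bar>-2 * p * sqrt t\<bar> ^ k / fact k))"
    by (rule summable_mult)
  then show "summable (\<lambda>k. norm ((-2 * p) ^ k / fact k * Gamma_integrand (a + real k / 2) t))"
    unfolding term_eq by (simp add: abs_mult Gamma_integrand_nonneg power_abs)
qed

text \<open>Since \<open>\<Gamma>(a + k/2)\<close> is the integral of the \<open>\<Gamma>(a)\<close>-integrand times \<open>\<surd>t\<^sup>k\<close>, summing the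
  Taylor series of \<open>w\<^sub>a\<close> under the integral turns it into the exponential series of \<open>-2 p \<surd>t\<close>.\<close>
lemma tricomi_half_integral:
  assumes a: "a > 0"
  defines "K \<equiv> sqrt pi * rGamma a * rGamma (a + 1/2)"
  shows "integrable lborel (\<lambda>t. Gamma_integrand a t * exp (-2 * p * sqrt t))"
    and "tricomi_half a p = K * (\<integral>t. Gamma_integrand a t * exp (-2 * p * sqrt t) \<partial>lborel)"
proof -
  define f where "f k t = (-2 * p) ^ k / fact k * Gamma_integrand (a + real k / 2) t" for k t
  have ak: "a + real k / 2 > 0" for k using a by (simp add: add_pos_nonneg)
  have K: "K > 0" unfolding K_def using a by (simp add: rGamma_real_pos)
  have int: "integrable lborel (f k)" for k
    unfolding f_def by (intro integrable_mult_right integrable_Gamma_integrand[OF ak])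
  have integral_f: "integral\<^sup>L lborel (f k) = (-2 * p) ^ k / fact k * Gamma (a + real k / 2)" for k
    unfolding f_def using integral_Gamma_integrand[OF ak] by simp
  have coeff_eq: "tricomi_coeff a k * p ^ k = K * integral\<^sup>L lborel (f k)" for k
    unfolding integral_f tricomi_coeff_Gamma[OF a] K_def power_mult_distrib by simp
  have "(\<integral>t. norm (f k t) \<partial>lborel) = \<bar>integral\<^sup>L lborel (f k)\<bar>" for k
    unfolding integral_f using Gamma_real_pos[OF ak[of k]]
    by (simp add: f_def abs_mult Gamma_integrand_nonneg integral_Gamma_integrand[OF ak])
  hence summable_int: "summable (\<lambda>k. \<integral>t. norm (f k t) \<partial>lborel)"
    using summable_divide[OF summable_abs_tricomi_coeff, of a p K] K by (simp add: coeff_eq abs_mult)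
  note summable_t = Gamma_integrand_exp_series(2)[of p a, folded f_def]
  have "integrable lborel (\<lambda>t. \<Sum>k. f k t)"
    by (rule integrable_suminf[OF int]) (use summable_t summable_int in auto)
  moreover have integral: "(\<integral>t. (\<Sum>k. f k t) \<partial>lborel) = (\<Sum>k. integral\<^sup>L lborel (f k))"
    by (rule integral_suminf[OF int]) (use summable_t summable_int in auto)
  moreover have series: "(\<lambda>t. \<Sum>k. f k t) = (\<lambda>t. Gamma_integrand a t * exp (-2 * p * sqrt t))"
    using Gamma_integrand_exp_series(1)[of p a, folded f_def] by (auto intro!: ext sums_unique[symmetric])
  ultimately show "integrable lborel (\<lambda>t. Gamma_integrand a t * exp (-2 * p * sqrt t))" by simp
  have "summable (\<lambda>k. integral\<^sup>L lborel (f k))"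
    using summable_divide[OF summable_tricomi_coeff, of a p K] K by (simp add: coeff_eq)
  then show "tricomi_half a p = K * (\<integral>t. Gamma_integrand a t * exp (-2 * p * sqrt t) \<partial>lborel)"
    unfolding integral[unfolded series] tricomi_half_def coeff_eq by (rule suminf_mult)
qed

lemma tricomi_half_pos:
  assumes a: "a > 0"
  shows "tricomi_half a p > 0"
proof -
  let ?g = "\<lambda>t. Gamma_integrand a t * exp (-2 * p * sqrt t)"
  have nonneg: "AE t in lborel. 0 \<le> ?g t" by (simp add: Gamma_integrand_nonneg)
  have "integral\<^sup>L lborel ?g \<noteq> 0"
  proof
    assume "integral\<^sup>L lborel ?g = 0"
    hence "AE t in lborel. ?g t = 0"
      using integral_nonneg_eq_0_iff_AE[OF tricomi_half_integral(1)[OF a] nonneg] by simp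
    hence "AE t in lborel. t \<notin> {0<..<1::real}"
      by eventually_elim (auto simp: Gamma_integrand_def)
    hence "emeasure lborel {0<..<1::real} = 0"
      by (subst (asm) AE_iff_measurable[where N = "{0<..<1::real}"]) auto
    thus False by simp
  qed
  moreover have "integral\<^sup>L lborel ?g \<ge> 0" by (rule integral_nonneg_AE[OF nonneg])
  moreover have "sqrt pi * rGamma a * rGamma (a + 1/2) > 0"
    using a by (simp add: rGamma_real_pos)
  ultimately show ?thesis by (simp add: tricomi_half_integral(2)[OF a])
qed

lemma ex_shift_half_pos: "\<exists>N. \<forall>j\<ge>N. a + real j / 2 > (0::real)"
proof -
  obtain N :: nat where "real N > -2 * a" using reals_Archimedean2 by blast
  then show ?thesis by (intro exI[of _ N]) auto
qed

lemma tricomi_half_recurrence_shift: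
  "tricomi_half (a + real j / 2) p = p * tricomi_half (a + real (Suc j) / 2) p
     + (a + real (Suc j) / 2) * tricomi_half (a + real (Suc (Suc j)) / 2) p"
proof -
  have "a + real j / 2 + 1/2 = a + real (Suc j) / 2" and "a + real j / 2 + 1 = a + real (Suc (Suc j)) / 2"
    by (simp_all add: field_simps)
  then show ?thesis using tricomi_half_recurrence[of "a + real j / 2" p] by metis
qed

lemma recurrence_ratio_step:
  fixes p x y b :: real
  assumes p: "p > 0" and x: "x > 0" and y: "y > 0" and xy: "x > p/2 * y" and b: "p\<^sup>2 + 4 * b \<ge> 0"
  shows "p * x + b * y > p/2 * x"
proof (cases "b \<ge> 0")
  case True
  then show ?thesis using p x y by (simp add: add_pos_nonneg)
next
  case False
  have "b * (p * y) > b * (2 * x)" using False xy by (simp add: mult_strict_left_mono_neg)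
  moreover have "(p\<^sup>2/2 + 2 * b) * x \<ge> 0" using b x by (intro mult_nonneg_nonneg) auto
  ultimately have "p * (p * x + b * y) > p * (p/2 * x)"
    by (simp add: algebra_simps power2_eq_square)
  thus ?thesis using p by simp
qed

text \<open>Downward induction on \<open>j\<close>: for large \<open>j\<close> all parameters are positive, so the recurrence
  gives the bound directly; below that, \<open>recurrence_ratio_step\<close> carries it down since
  \<open>p\<^sup>2 + 4 (a + j/2) \<ge> 0\<close>.\<close>
lemma tricomi_half_ratio:
  assumes p: "p > 0" and pa: "p\<^sup>2 \<ge> -4 * a"
  shows "tricomi_half (a + real (Suc j) / 2) p > 0
    \<and> tricomi_half (a + real j / 2) p > p/2 * tricomi_half (a + real (Suc j) / 2) p"
proof -
  define h where "h j = tricomi_half (a + real j / 2) p" for j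
  obtain N where N: "\<And>j. j \<ge> N \<Longrightarrow> a + real j / 2 > 0" using ex_shift_half_pos by blast
  have rec: "h j = p * h (Suc j) + (a + real (Suc j) / 2) * h (Suc (Suc j))" for j
    unfolding h_def by (rule tricomi_half_recurrence_shift)
  have base: "h (Suc j) > 0 \<and> h j > p/2 * h (Suc j)" if "j \<ge> N" for j
  proof -
    have "h (Suc j) > 0" "h (Suc (Suc j)) > 0" "a + real (Suc j) / 2 > 0"
      using that N[of "Suc j"] N[of "Suc (Suc j)"] unfolding h_def by (auto intro!: tricomi_half_pos)
    thus ?thesis using rec[of j] p by (simp add: add_pos_pos mult_pos_pos)
  qed
  have step: "h (Suc j) > 0 \<and> h j > p/2 * h (Suc j)"
    if "h (Suc (Suc j)) > 0 \<and> h (Suc j) > p/2 * h (Suc (Suc j))" for j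
  proof -
    have "h (Suc j) > 0" using that p by (smt (verit) mult_pos_pos half_gt_zero)
    moreover have "4 * (a + real (Suc j) / 2) = 4 * a + 2 * real (Suc j)" by simp
    hence "p\<^sup>2 + 4 * (a + real (Suc j) / 2) \<ge> 0" using pa of_nat_0_le_iff[of "Suc j"] by linarith
    ultimately have "p * h (Suc j) + (a + real (Suc j) / 2) * h (Suc (Suc j)) > p/2 * h (Suc j)"
      using recurrence_ratio_step[OF p] that by blast
    with \<open>h (Suc j) > 0\<close> show ?thesis using rec[of j] by simp
  qed
  have "h (Suc j) > 0 \<and> h j > p/2 * h (Suc j)"
  proof (induction "N - j" arbitrary: j)
    case 0
    then show ?case using base by simp
  next
    case (Suc k)
    then show ?case using step[of j] by (metis Suc_diff_Suc diff_Suc_1 zero_less_Suc zero_less_diff)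
  qed
  thus ?thesis unfolding h_def .
qed

lemma tricomi_half_antimono:
  assumes "b > 0" and "c \<le> p"
  shows "tricomi_half b p \<le> tricomi_half b c"
proof (rule DERIV_nonpos_imp_nonincreasing[OF \<open>c \<le> p\<close>])
  fix x
  have "tricomi_half (b + 1/2) x > 0" using \<open>b > 0\<close> by (intro tricomi_half_pos) simp
  then show "\<exists>y. (tricomi_half b has_real_derivative y) (at x) \<and> y \<le> 0"
    using has_field_derivative_tricomi_half[of b x] \<open>b > 0\<close>
    by (intro exI[of _ "-2 * b * tricomi_half (b + 1/2) x"]) simp
qed

lemma tricomi_half_step_bound:
  assumes c: "c > 0" and cp: "c \<le> p" and pa: "p\<^sup>2 \<ge> -4 * a" and B: "\<bar>a + real (Suc j) / 2\<bar> \<le> B"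
  shows "tricomi_half (a + real j / 2) p \<le> (p + 2 * B / c) * tricomi_half (a + real (Suc j) / 2) p"
proof -
  define h where "h j = tricomi_half (a + real j / 2) p" for j
  have p: "p > 0" using c cp by simp
  from tricomi_half_ratio[OF p pa, of "Suc j"]
  have y: "h (Suc (Suc j)) > 0" and xy: "h (Suc j) > p/2 * h (Suc (Suc j))" unfolding h_def by auto
  have x: "h (Suc j) > 0" using y xy p by (smt (verit) mult_pos_pos half_gt_zero)
  have "h (Suc (Suc j)) \<le> 2 / p * h (Suc j)" using xy p by (simp add: field_simps)
  hence "(a + real (Suc j) / 2) * h (Suc (Suc j)) \<le> \<bar>a + real (Suc j) / 2\<bar> * (2 / p * h (Suc j))"
    using y by (intro mult_mono) auto
  also have "\<dots> \<le> 2 * B / c * h (Suc j)"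
  proof -
    have "2 / p \<le> 2 / c" using c cp by (intro divide_left_mono) auto
    hence "\<bar>a + real (Suc j) / 2\<bar> * (2 / p) \<le> B * (2 / c)"
      using B p by (intro mult_mono) auto
    from mult_right_mono[OF this less_imp_le[OF x]] show ?thesis by (simp add: mult_ac)
  qed
  finally show ?thesis
    using tricomi_half_recurrence_shift[of a j p] unfolding h_def by (simp add: algebra_simps)
qed

text \<open>Iterating \<open>tricomi_half_step_bound\<close> up to an index with positive parameter, where the
  function is decreasing in \<open>p\<close>.\<close>
lemma tricomi_half_poly_bound:
  assumes c: "c > 0" and ca: "c\<^sup>2 \<ge> -4 * a"
  obtains D M :: real and N :: nat where "D \<ge> 0" "\<And>p. c \<le> p \<Longrightarrow> tricomi_half a p \<le> M * (p + D) ^ N"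
proof -
  obtain N where N: "\<And>j. j \<ge> N \<Longrightarrow> a + real j / 2 > 0" using ex_shift_half_pos by blast
  define D where "D = 2 * (\<bar>a\<bar> + real N) / c"
  have D: "D \<ge> 0" unfolding D_def using c by simp
  have "tricomi_half a p \<le> tricomi_half (a + real N / 2) c * (p + D) ^ N" if cp: "c \<le> p" for p
  proof -
    define h where "h j = tricomi_half (a + real j / 2) p" for j
    have p: "p > 0" using c cp by simp
    have pa: "p\<^sup>2 \<ge> -4 * a" using ca power_mono[OF cp] c by (smt (verit))
    have step: "h j \<le> (p + D) * h (Suc j)" if "j < N" for j
    proof -
      have "real (Suc j) / 2 \<le> real N" "real (Suc j) / 2 \<ge> 0" using that by simp_all
      hence "\<bar>a + real (Suc j) / 2\<bar> \<le> \<bar>a\<bar> + real N" by linarith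
      from tricomi_half_step_bound[OF c cp pa this] show ?thesis unfolding h_def D_def by simp
    qed
    have "h 0 \<le> (p + D) ^ j * h j" if "j \<le> N" for j
      using that
    proof (induction j)
      case (Suc j)
      have "h 0 \<le> (p + D) ^ j * h j" using Suc by simp
      also have "\<dots> \<le> (p + D) ^ j * ((p + D) * h (Suc j))"
        using step[of j] Suc.prems p D by (intro mult_left_mono) auto
      finally show ?case by (simp add: algebra_simps)
    qed simp
    from this[of N] have "h 0 \<le> (p + D) ^ N * h N" by simp
    also have "\<dots> \<le> (p + D) ^ N * tricomi_half (a + real N / 2) c"
      unfolding h_def using p D N cp by (intro mult_left_mono tricomi_half_antimono) auto
    finally show ?thesis unfolding h_def by (simp add: mult.commute)
  qed
  with D show thesis using that by blast
qed

lemma tendsto_exp_neg_times_power: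
  fixes k s u :: real
  assumes k: "k > 0" and s: "s > 0" and u: "u \<ge> 0"
  shows "((\<lambda>x. exp (- k * x) * (u + s * x) ^ N) \<longlongrightarrow> 0) at_top"
proof (rule tendsto_sandwich[of "\<lambda>_. 0" _ _ "\<lambda>x. (2 * s / k) ^ N * ((k * x) ^ N / exp (k * x))"])
  show "eventually (\<lambda>x. 0 \<le> exp (- k * x) * (u + s * x) ^ N) at_top"
    using eventually_ge_at_top[of 0] by eventually_elim (use s u in simp)
  show "eventually (\<lambda>x. exp (- k * x) * (u + s * x) ^ N \<le> (2 * s / k) ^ N * ((k * x) ^ N / exp (k * x))) at_top"
    using eventually_ge_at_top[of "u / s"] eventually_ge_at_top[of 0]
  proof eventually_elim
    case (elim x)
    have "u + s * x \<le> (2 * s / k) * (k * x)" using elim s k by (simp add: field_simps)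
    hence "(u + s * x) ^ N \<le> ((2 * s / k) * (k * x)) ^ N" by (intro power_mono) (use u s elim in auto)
    hence "exp (- k * x) * (u + s * x) ^ N \<le> exp (- k * x) * ((2 * s / k) * (k * x)) ^ N"
      by (intro mult_left_mono) auto
    also have "\<dots> = (2 * s / k) ^ N * ((k * x) ^ N / exp (k * x))"
      by (simp add: power_mult_distrib exp_minus field_simps)
    finally show ?case .
  qed
  have "filterlim (\<lambda>x. k * x) at_top at_top"
    by (rule filterlim_tendsto_pos_mult_at_top[OF tendsto_const k filterlim_ident])
  then show "((\<lambda>x. (2 * s / k) ^ N * ((k * x) ^ N / exp (k * x))) \<longlongrightarrow> 0) at_top"
    by (intro tendsto_mult_right_zero filterlim_compose[OF tendsto_power_div_exp_0])
qed simp

lemma exp_scaled_ode: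
  fixes w w' w'' :: "real \<Rightarrow> real" and c s :: real
  assumes w: "\<And>p. (w has_real_derivative w' p) (at p)"
    and w': "\<And>p. (w' has_real_derivative w'' p) (at p)"
    and ode: "\<And>p. w'' p = 2 * p * w' p - c\<^sup>2 * w p"
  defines "f \<equiv> \<lambda>x. exp (- s * c * x) * w (c + s * x)"
  shows "deriv f = (\<lambda>x. exp (- s * c * x) * s * (w' (c + s * x) - c * w (c + s * x)))"
    and "f differentiable at x" and "deriv f differentiable at x"
    and "1/2 * deriv (deriv f) x - s\<^sup>2 * x * deriv f x - s ^ 3 * c * x * f x = 0"
proof -
  define f' where "f' x = exp (- s * c * x) * s * (w' (c + s * x) - c * w (c + s * x))" for x
  define f'' where "f'' x = exp (- s * c * x) * s\<^sup>2
    * (w'' (c + s * x) - 2 * c * w' (c + s * x) + c\<^sup>2 * w (c + s * x))" for x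
  have chain: "((\<lambda>x. g (c + s * x)) has_real_derivative g' (c + s * x) * s) (at x)"
    if "\<And>p. (g has_real_derivative g' p) (at p)" for g g' :: "real \<Rightarrow> real" and x
    by (rule DERIV_chain2[OF that]) (auto intro!: derivative_eq_intros)
  have df: "(f has_real_derivative f' x) (at x)" for x
    unfolding f_def f'_def using chain[OF w, of x]
    by (auto intro!: derivative_eq_intros simp: algebra_simps)
  have df': "(f' has_real_derivative f'' x) (at x)" for x
    unfolding f'_def f''_def using chain[OF w, of x] chain[OF w', of x]
    by (auto intro!: derivative_eq_intros simp: algebra_simps power2_eq_square)
  have deriv_f: "deriv f = f'"
    using df by (simp add: fun_eq_iff DERIV_imp_deriv)
  then show "deriv f = (\<lambda>x. exp (- s * c * x) * s * (w' (c + s * x) - c * w (c + s * x)))"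
    by (simp add: f'_def fun_eq_iff)
  show "f differentiable at x" "deriv f differentiable at x"
    unfolding deriv_f real_differentiable_def using df[of x] df'[of x] by auto
  have dd: "deriv f' x = f'' x" using df' by (rule DERIV_imp_deriv)
  show "1/2 * deriv (deriv f) x - s\<^sup>2 * x * deriv f x - s ^ 3 * c * x * f x = 0"
    unfolding deriv_f dd unfolding f'_def f''_def f_def ode
    by (simp add: algebra_simps power2_eq_square power3_eq_cube)
qed

text \<open>The solution in the variable \<open>p = c + s x\<close>: with \<open>s = \<surd>\<mu>\<close> and \<open>c = \<gamma> / \<mu>\<^sup>3\<^sup>/\<^sup>2\<close> one has
  \<open>\<gamma>/\<mu> = s c\<close> and \<open>-\<gamma>\<^sup>2/(4\<mu>\<^sup>3) = -c\<^sup>2/4\<close>.\<close>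
definition scaled_tricomi_half :: "real \<Rightarrow> real \<Rightarrow> real \<Rightarrow> real" where
  "scaled_tricomi_half c s x = exp (- s * c * x) * tricomi_half (- c\<^sup>2 / 4) (c + s * x)"

lemma scaled_tricomi_half_ode:
  fixes c s x :: real
  defines "f \<equiv> scaled_tricomi_half c s"
  shows "deriv f = (\<lambda>x. exp (- s * c * x) * s * c
      * (c / 2 * tricomi_half (- c\<^sup>2 / 4 + 1/2) (c + s * x) - tricomi_half (- c\<^sup>2 / 4) (c + s * x)))"
    and "f differentiable at x" and "deriv f differentiable at x"
    and "1/2 * deriv (deriv f) x - s\<^sup>2 * x * deriv f x - s ^ 3 * c * x * f x = 0"
proof -
  let ?a = "- c\<^sup>2 / 4"
  have f_eq: "f = (\<lambda>x. exp (- s * c * x) * tricomi_half ?a (c + s * x))"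
    by (simp add: fun_eq_iff f_def scaled_tricomi_half_def)
  have d0: "(tricomi_half ?a has_real_derivative -2 * ?a * tricomi_half (?a + 1/2) p) (at p)" for p
    by (rule has_field_derivative_tricomi_half)
  have d1: "((\<lambda>p. -2 * ?a * tricomi_half (?a + 1/2) p) has_real_derivative
          -2 * ?a * (-2 * (?a + 1/2) * tricomi_half (?a + 1) p)) (at p)" for p
    using DERIV_cmult[OF has_field_derivative_tricomi_half[of "?a + 1/2" p], of "-2 * ?a"]
    by (simp add: add.assoc)
  have hermite: "-2 * ?a * (-2 * (?a + 1/2) * tricomi_half (?a + 1) p)
      = 2 * p * (-2 * ?a * tricomi_half (?a + 1/2) p) - c\<^sup>2 * tricomi_half ?a p" for p
    by (subst tricomi_half_recurrence[of ?a p]) (simp add: algebra_simps power2_eq_square)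
  note ode = exp_scaled_ode[of "tricomi_half ?a" "\<lambda>p. -2 * ?a * tricomi_half (?a + 1/2) p"
      "\<lambda>p. -2 * ?a * (-2 * (?a + 1/2) * tricomi_half (?a + 1) p)" c s, OF d0 d1 hermite,
      folded f_eq]
  show "deriv f = (\<lambda>x. exp (- s * c * x) * s * c
      * (c / 2 * tricomi_half (- c\<^sup>2 / 4 + 1/2) (c + s * x) - tricomi_half (- c\<^sup>2 / 4) (c + s * x)))"
    unfolding ode(1) by (simp add: fun_eq_iff algebra_simps power2_eq_square)
  show "f differentiable at x" "deriv f differentiable at x" by (fact ode(2,3))+
  show "1/2 * deriv (deriv f) x - s\<^sup>2 * x * deriv f x - s ^ 3 * c * x * f x = 0"
    using ode(4)[of x] by (simp add: f_eq)
qed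

lemma tricomi_half_ratio_ge:
  assumes "c > 0" and "c \<le> p"
  shows "tricomi_half (- c\<^sup>2 / 4 + 1/2) p > 0"
    and "tricomi_half (- c\<^sup>2 / 4) p > c / 2 * tricomi_half (- c\<^sup>2 / 4 + 1/2) p"
proof -
  have p: "p > 0" using assms by simp
  have "p\<^sup>2 \<ge> - 4 * (- c\<^sup>2 / 4)" using assms by (simp add: power_mono)
  from tricomi_half_ratio[OF p this, of 0]
  have pos: "tricomi_half (- c\<^sup>2 / 4 + 1/2) p > 0"
    and gt: "tricomi_half (- c\<^sup>2 / 4) p > p / 2 * tricomi_half (- c\<^sup>2 / 4 + 1/2) p"
    by simp_all
  show "tricomi_half (- c\<^sup>2 / 4 + 1/2) p > 0" by (fact pos)
  have "c / 2 * tricomi_half (- c\<^sup>2 / 4 + 1/2) p \<le> p / 2 * tricomi_half (- c\<^sup>2 / 4 + 1/2) p"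
    using assms pos by (intro mult_right_mono) auto
  with gt show "tricomi_half (- c\<^sup>2 / 4) p > c / 2 * tricomi_half (- c\<^sup>2 / 4 + 1/2) p" by simp
qed

lemma scaled_tricomi_half_pos:
  assumes "c > 0" and "s \<ge> 0" and "x \<ge> 0"
  shows "scaled_tricomi_half c s x > 0"
proof -
  have "c \<le> c + s * x" using assms by simp
  from tricomi_half_ratio_ge[OF \<open>c > 0\<close> this] \<open>c > 0\<close>
  have "tricomi_half (- c\<^sup>2 / 4) (c + s * x) > 0" by (smt (verit) mult_pos_pos half_gt_zero)
  then show ?thesis unfolding scaled_tricomi_half_def by simp
qed

lemma scaled_tricomi_half_decreasing:
  assumes c: "c > 0" and s: "s > 0" and "0 \<le> x" and "x < y"
  shows "scaled_tricomi_half c s y < scaled_tricomi_half c s x"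
proof (rule DERIV_neg_imp_decreasing[OF \<open>x < y\<close>])
  fix t assume "x \<le> t"
  hence "c \<le> c + s * t" using \<open>0 \<le> x\<close> s by simp
  from tricomi_half_ratio_ge(2)[OF c this]
  have "deriv (scaled_tricomi_half c s) t < 0"
    unfolding scaled_tricomi_half_ode(1) using c s by (simp add: mult_pos_neg)
  moreover have "scaled_tricomi_half c s differentiable at t" by (rule scaled_tricomi_half_ode(2))
  ultimately show "\<exists>y. (scaled_tricomi_half c s has_real_derivative y) (at t) \<and> y < 0"
    using DERIV_deriv_iff_real_differentiable by blast
qed

lemma scaled_tricomi_half_tendsto_0:
  assumes c: "c > 0" and s: "s > 0"
  shows "(scaled_tricomi_half c s \<longlongrightarrow> 0) at_top"
proof -
  have "c\<^sup>2 \<ge> -4 * (- c\<^sup>2 / 4)" by simp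
  from tricomi_half_poly_bound[OF c this] obtain D M N where D: "D \<ge> 0"
    and bound: "\<And>p. c \<le> p \<Longrightarrow> tricomi_half (- c\<^sup>2 / 4) p \<le> M * (p + D) ^ N"
    by blast
  let ?g = "\<lambda>x. M * (exp (- (s * c) * x) * ((c + D) + s * x) ^ N)"
  show ?thesis
  proof (rule tendsto_sandwich[of "\<lambda>_. 0" _ _ ?g])
    show "eventually (\<lambda>x. 0 \<le> scaled_tricomi_half c s x) at_top"
      using eventually_ge_at_top[of 0]
      by eventually_elim (use scaled_tricomi_half_pos[OF c] s in \<open>auto intro: less_imp_le\<close>)
    show "eventually (\<lambda>x. scaled_tricomi_half c s x \<le> ?g x) at_top"
      using eventually_ge_at_top[of 0]
    proof eventually_elim
      case (elim x)
      have "c \<le> c + s * x" using elim s by simp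
      from mult_left_mono[OF bound[OF this], of "exp (- s * c * x)"]
      show ?case unfolding scaled_tricomi_half_def by (simp add: ac_simps)
    qed
    show "(?g \<longlongrightarrow> 0) at_top"
      using c s D by (intro tendsto_mult_right_zero tendsto_exp_neg_times_power) auto
  qed simp
qed

lemma deriv_cong_open:
  fixes f g :: "real \<Rightarrow> real"
  assumes "open S" and "x \<in> S" and "\<And>y. y \<in> S \<Longrightarrow> f y = g y"
  shows "deriv f x = deriv g x" and "f differentiable at x \<longleftrightarrow> g differentiable at x"
proof -
  have ev: "eventually (\<lambda>y. f y = g y) (nhds x)"
    using eventually_nhds_in_open[OF assms(1,2)] by eventually_elim (use assms(3) in auto)
  show "deriv f x = deriv g x" using deriv_cong_ev[OF ev refl] .
  show "f differentiable at x \<longleftrightarrow> g differentiable at x"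
    unfolding DERIV_deriv_iff_real_differentiable[symmetric] deriv_cong_ev[OF ev refl]
    by (rule DERIV_cong_ev[OF refl ev refl])
qed

lemma scaled_tricomi_half_solution:
  fixes g :: "real \<Rightarrow> real"
  assumes c: "c > 0" and s: "s > 0"
    and g_eq: "\<And>x. 0 < c + s * x \<Longrightarrow> g x = scaled_tricomi_half c s x"
  shows "(\<forall>x\<ge>0. g x > 0)
    \<and> (\<forall>x y. 0 \<le> x \<longrightarrow> x < y \<longrightarrow> g y < g x)
    \<and> (\<forall>x\<ge>0. g differentiable (at x) \<and> deriv g differentiable (at x)
          \<and> 1/2 * deriv (deriv g) x - s\<^sup>2 * x * deriv g x - s ^ 3 * c * x * g x = 0)
    \<and> (g \<longlongrightarrow> 0) at_top"
proof -
  define f where "f = scaled_tricomi_half c s"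
  define S where "S = {x. 0 < c + s * x}"
  have S: "open S" "\<And>x. 0 \<le> x \<Longrightarrow> x \<in> S"
    unfolding S_def using c s by (auto intro!: open_Collect_less continuous_intros add_pos_nonneg)
  have g_f: "g x = f x" if "x \<in> S" for x using g_eq that by (simp add: S_def f_def)
  have deriv_eq: "deriv g x = deriv f x" if "x \<in> S" for x
    using deriv_cong_open(1)[OF S(1) that g_f] .
  have "g x > 0" if "x \<ge> 0" for x
    using g_f[OF S(2)[OF that]] scaled_tricomi_half_pos[OF c less_imp_le[OF s] that] by (simp add: f_def)
  moreover have "g y < g x" if "0 \<le> x" "x < y" for x y
    using g_f[OF S(2)] scaled_tricomi_half_decreasing[OF c s that] that by (simp add: f_def)
  moreover have "g differentiable (at x) \<and> deriv g differentiable (at x)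
      \<and> 1/2 * deriv (deriv g) x - s\<^sup>2 * x * deriv g x - s ^ 3 * c * x * g x = 0" if "x \<ge> 0" for x
    using scaled_tricomi_half_ode(2-4)[of c s x, folded f_def] S(2)[OF that]
      deriv_cong_open[OF S(1) _ g_f] deriv_cong_open[OF S(1) _ deriv_eq] g_f deriv_eq
    by simp
  moreover have "eventually (\<lambda>x. f x = g x) at_top"
    using eventually_ge_at_top[of 0] by eventually_elim (simp add: g_f S(2))
  hence "(g \<longlongrightarrow> 0) at_top"
    using Lim_transform_eventually scaled_tricomi_half_tendsto_0[OF c s, folded f_def] by blast
  ultimately show ?thesis by blast
qed

theorem lemma3p5:
  fixes \<mu> \<gamma> :: real and p \<phi> :: "real \<Rightarrow> real"
  assumes "\<mu> > 0" and "\<gamma> > 0"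
  defines "p \<equiv> (\<lambda>x. \<gamma> / \<mu> powr (3/2) + sqrt \<mu> * x)"
  defines "\<phi> \<equiv> (\<lambda>x. exp (- \<gamma> * x / \<mu>) * tricomiU (- \<gamma>\<^sup>2 / (4 * \<mu> ^ 3)) (1/2) ((p x)\<^sup>2))"
  shows "(\<forall>x\<ge>0. \<phi> x > 0)
    \<and> (\<forall>x y. 0 \<le> x \<longrightarrow> x < y \<longrightarrow> \<phi> y < \<phi> x)
    \<and> (\<forall>x\<ge>0. \<phi> differentiable (at x) \<and> deriv \<phi> differentiable (at x)
          \<and> 1/2 * deriv (deriv \<phi>) x - \<mu> * x * deriv \<phi> x - \<gamma> * x * \<phi> x = 0)
    \<and> (\<phi> \<longlongrightarrow> 0) at_top"
proof -
  define s where "s = sqrt \<mu>"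
  define c where "c = \<gamma> / \<mu> powr (3/2)"
  have s: "s > 0" and c: "c > 0" using assms by (simp_all add: s_def c_def)
  have \<mu>: "\<mu> = s\<^sup>2" using assms by (simp add: s_def)
  have "\<mu> powr (3/2) = s ^ 3"
    using powr_add[of \<mu> 1 "1/2"] assms by (simp add: s_def powr_half_sqrt power3_eq_cube)
  hence \<gamma>: "\<gamma> = s ^ 3 * c" using s by (simp add: c_def)
  have a: "- \<gamma>\<^sup>2 / (4 * \<mu> ^ 3) = - c\<^sup>2 / 4" and rate: "- \<gamma> * x / \<mu> = - s * c * x" for x
    unfolding \<gamma> \<mu> using s by (simp_all add: field_simps power2_eq_square power3_eq_cube)
  have "p x = c + s * x" for x by (simp add: p_def c_def s_def)
  hence "\<phi> x = scaled_tricomi_half c s x" if "0 < c + s * x" for x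
    using tricomiU_half_eq[OF that] unfolding \<phi>_def scaled_tricomi_half_def a rate by simp
  from scaled_tricomi_half_solution[OF c s this] show ?thesis unfolding \<mu> \<gamma> .
qed

end
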